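(* Let $x_*$ be a feasible point of problem $(\mathcal{P})$ and $p\in\{1,\dots,d+1\}$. A $p$-point alternance exists at $x_*$ if and only if there exist $k_0\in\{1,\dots,p\}$, $i_0\in\{k_0,\dots,p\}$ and vectors $V_1,\dots,V_{k_0}\in\{\nabla_xf(x_*,\omega):\omega\in W(x_* )\}$, $V_{k_0+1},\dots,V_{i_0}\in\eta(x_* )$, $V_{i_0+1},\dots,V_p\in n_A(x_* )$ such that $\operatorname{rank}([V_1,\dots,V_p])=p-1$ and $\sum_{i=1}^p\beta_iV_i=0$ for some $\beta_i>0$, $i=1,\dots,p$. Furthermore, a collection $\{V_1,\dots,V_p\}$ of vectors of this form is a $p$-point alternance at $x_*$ if and only if $\operatorname{rank}([V_1,\dots,V_p])=p-1$ and $\sum_{i=1}^p\beta_iV_i=0$ for some $\beta_i>0$.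
   Context: Setting: $A\subseteq\mathbb{R}^d$ nonempty closed convex; $Y$ real Banach space with dual $Y^*$, pairing $\langle\cdot,\cdot\rangle$; $K\subset Y$ nonempty closed convex cone; $W$ compact Hausdorff; $f:\mathbb{R}^d\times W\to\mathbb{R}$ differentiable in $x$ with $f,\nabla_xf$ jointly continuous; $G:\mathbb{R}^d\to Y$ continuously Fréchet differentiable. $F(x)=\max_\omega f(x,\omega)$, $W(x)=\{\omega:f(x,\omega)=F(x)\}$; problem $(\mathcal{P})$: minimise $F$ s.t. $G(x)\in K$, $x\in A$. $K^*=\{y^*:\langle y^*,y\rangle\le0\ \forall y\in K\}$; $\mathcal{N}(x)=\{[DG(x)]^*\lambda:\lambda\in K^*,\langle\lambda,G(x)\rangle=0\}$ where $[DG(x)]^*\lambda\in\mathbb{R}^d$ satisfies $\langle[DG(x)]^*\lambda,h\rangle=\langle\lambda,DG(x)h\rangle$; $N_A(x)$ is the normal cone of convex analysis to $A$ at $x$. Fix $Z\subset\mathbb{R}^d$ consisting of $d$ linearly independent vectors, and sets $\eta(x_* )\subseteq\mathcal{N}(x_* )$, $n_A(x_* )\subseteq N_A(x_* )$ whose convex conic hulls are $\mathcal{N}(x_* )$ and $N_A(x_* )$. A $p$-point alternance exists at $x_*$ if there exist $k_0\in\{1,\dots,p\}$, $i_0\in\{k_0,\dots,p\}$, vectors $V_1,\dots,V_{k_0}\in\{\nabla_xf(x_*,\omega):\omega\in W(x_* )\}$, $V_{k_0+1},\dots,V_{i_0}\in\eta(x_* )$, $V_{i_0+1},\dots,V_p\in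 n_A(x_* )$ (ranges with upper index less than lower index are empty), and $V_{p+1},\dots,V_{d+1}\in Z$ such that the determinants $\Delta_s=\det[V_1,\dots,V_{s-1},V_{s+1},\dots,V_{d+1}]$ satisfy $\Delta_s\ne0$ for $s\le p$, $\operatorname{sign}\Delta_s=-\operatorname{sign}\Delta_{s+1}$ for $s\le p-1$, and $\Delta_s=0$ for $s\in\{p+1,\dots,d+1\}$; the collection $\{V_1,\dots,V_p\}$ is then called a $p$-point alternance at $x_*$. *)

theory Defs
  imports "HOL-Analysis.Analysis"
begin

definition maxfun :: "('x \<Rightarrow> 'w \<Rightarrow> real) \<Rightarrow> 'x \<Rightarrow> real" where
  "maxfun f x = (SUP \<omega>\<in>(UNIV::'w set). f x \<omega>)"

definition active_set :: "('x \<Rightarrow> 'w \<Rightarrow> real) \<Rightarrow> 'x \<Rightarrow> 'w set" where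
  "active_set f x = {\<omega>. f x \<omega> = maxfun f x}"

definition polar_cone :: "'y::real_normed_vector set \<Rightarrow> ('y \<Rightarrow>\<^sub>L real) set" where
  "polar_cone K = {l. \<forall>y\<in>K. blinfun_apply l y \<le> 0}"

definition constraint_normals ::
  "(real^'n \<Rightarrow> 'y::real_normed_vector) \<Rightarrow> (real^'n \<Rightarrow> ((real^'n) \<Rightarrow>\<^sub>L 'y)) \<Rightarrow> 'y set
   \<Rightarrow> real^'n \<Rightarrow> (real^'n) set" where
  "constraint_normals G DG K x =
     {v. \<exists>l\<in>polar_cone K. blinfun_apply l (G x) = 0 \<and>
          (\<forall>h. v \<bullet> h = blinfun_apply l (blinfun_apply (DG x) h))}"

definition normal_cone_cvx :: "(real^'n) set \<Rightarrow> real^'n \<Rightarrow> (real^'n) set" where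
  "normal_cone_cvx A x = {v. \<forall>a\<in>A. v \<bullet> (a - x) \<le> 0}"

definition convex_conic_hull :: "'a::real_vector set \<Rightarrow> 'a set" where
  "convex_conic_hull S = {v. \<exists>T c. finite T \<and> T \<subseteq> S \<and> (\<forall>u\<in>T. c u \<ge> 0) \<and>
                               v = (\<Sum>u\<in>T. c u *\<^sub>R u)}"

(* Fixed enumeration of the coordinate/column index type by {1..d}.
   (Any choice only changes all determinants by the same sign.) *)
definition pos_of :: "'n::finite \<Rightarrow> nat" where
  "pos_of = (SOME g. bij_betw g (UNIV::'n set) {1..CARD('n)})"

(* k-th column (k = 1..d) of the matrix [V_1,...,V_{s-1},V_{s+1},...,V_{d+1}] *)
definition col_index :: "nat \<Rightarrow> nat \<Rightarrow> nat" where
  "col_index s k = (if k < s then k else Suc k)"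

definition Delta :: "(nat \<Rightarrow> real^'n::finite) \<Rightarrow> nat \<Rightarrow> real" where
  "Delta V s = det (\<chi> i j. V (col_index s (pos_of j)) $ i)"

definition alternance_data ::
  "(real^'n::finite) set \<Rightarrow> (real^'n) set \<Rightarrow> (real^'n) set \<Rightarrow> (real^'n) set
   \<Rightarrow> nat \<Rightarrow> nat \<Rightarrow> nat \<Rightarrow> (nat \<Rightarrow> real^'n) \<Rightarrow> bool" where
  "alternance_data Grad eta nA Z p k0 i0 V \<longleftrightarrow>
     k0 \<in> {1..p} \<and> i0 \<in> {k0..p} \<and>
     (\<forall>i\<in>{1..k0}. V i \<in> Grad) \<and>
     (\<forall>i\<in>{k0+1..i0}. V i \<in> eta) \<and>
     (\<forall>i\<in>{i0+1..p}. V i \<in> nA) \<and>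
     (\<forall>i\<in>{p+1..CARD('n)+1}. V i \<in> Z) \<and>
     (\<forall>s\<in>{1..p}. Delta V s \<noteq> 0) \<and>
     (\<forall>s\<in>{1..p-1}. sgn (Delta V s) = - sgn (Delta V (s+1))) \<and>
     (\<forall>s\<in>{p+1..CARD('n)+1}. Delta V s = 0)"

definition alternance_exists ::
  "(real^'n::finite) set \<Rightarrow> (real^'n) set \<Rightarrow> (real^'n) set \<Rightarrow> (real^'n) set \<Rightarrow> nat \<Rightarrow> bool" where
  "alternance_exists Grad eta nA Z p \<longleftrightarrow> (\<exists>k0 i0 V. alternance_data Grad eta nA Z p k0 i0 V)"

definition is_alternance ::
  "(real^'n::finite) set \<Rightarrow> (real^'n) set \<Rightarrow> (real^'n) set \<Rightarrow> (real^'n) set \<Rightarrow> nat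
   \<Rightarrow> (nat \<Rightarrow> real^'n) \<Rightarrow> bool" where
  "is_alternance Grad eta nA Z p V \<longleftrightarrow>
     (\<exists>k0 i0 V'. (\<forall>i\<in>{1..p}. V' i = V i) \<and> alternance_data Grad eta nA Z p k0 i0 V')"

end

theory Submission
  imports Defs
begin

text \<open>Write \<open>\<Delta>\<^sub>s\<close> for the determinant of the \<open>d\<close> vectors other than \<open>V\<^sub>s\<close> among
  \<open>V\<^sub>1, \<dots>, V\<^sub>d\<^sub>+\<^sub>1\<close>. Then \<open>\<Delta>\<^sub>s = 0\<close> iff some linear relation \<open>\<Sum> g\<^sub>k V\<^sub>k = 0\<close> is nontrivial
  but has \<open>g\<^sub>s = 0\<close>, and expanding the determinant along one row shows that every relation
  satisfies \<open>g\<^sub>s \<Delta>\<^sub>s\<^sub>+\<^sub>1 + g\<^sub>s\<^sub>+\<^sub>1 \<Delta>\<^sub>s = 0\<close>. If \<open>\<Delta>\<^sub>1 \<noteq> 0\<close> the relations form a line, so the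
  determinant conditions of an alternance say exactly that the unique relation is positive on
  \<open>V\<^sub>1, \<dots>, V\<^sub>p\<close> and vanishes on the remaining vectors, i.e. that \<open>V\<^sub>1, \<dots>, V\<^sub>p\<close> have rank
  \<open>p - 1\<close> with a positive relation. Conversely such vectors are completed to an alternance by
  vectors of the basis \<open>Z\<close>. Only linear algebra is involved: the hypotheses on \<open>A\<close>, \<open>K\<close>,
  \<open>f\<close> and \<open>G\<close> merely describe where the vectors come from.\<close>

lemma inj_on_independent_image_iff:
  fixes W :: "nat \<Rightarrow> 'a::real_vector"
  assumes fin: "finite I"
  shows "inj_on W I \<and> independent (W ` I) \<longleftrightarrow>
    (\<forall>h. (\<Sum>k\<in>I. h k *\<^sub>R W k) = 0 \<longrightarrow> (\<forall>k\<in>I. h k = 0))"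
proof
  assume A: "inj_on W I \<and> independent (W ` I)"
  show "\<forall>h. (\<Sum>k\<in>I. h k *\<^sub>R W k) = 0 \<longrightarrow> (\<forall>k\<in>I. h k = 0)"
  proof (intro allI impI)
    fix h assume hs: "(\<Sum>k\<in>I. h k *\<^sub>R W k) = 0"
    define u where "u v = h (the_inv_into I W v)" for v
    have uW: "u (W k) = h k" if "k \<in> I" for k
      using A that by (simp add: u_def the_inv_into_f_f)
    have "(\<Sum>v\<in>W ` I. u v *\<^sub>R v) = (\<Sum>k\<in>I. u (W k) *\<^sub>R W k)"
      using A sum.reindex[of W I "\<lambda>v. u v *\<^sub>R v"] by simp
    also have "\<dots> = 0" using uW hs by (simp cong: sum.cong)
    finally have "\<forall>v\<in>W ` I. u v = 0"
      using A dependent_finite[of "W ` I"] fin by auto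
    then show "\<forall>k\<in>I. h k = 0" using uW by auto
  qed
next
  assume H: "\<forall>h. (\<Sum>k\<in>I. h k *\<^sub>R W k) = 0 \<longrightarrow> (\<forall>k\<in>I. h k = 0)"
  show "inj_on W I \<and> independent (W ` I)"
  proof
    show inj: "inj_on W I"
    proof (rule inj_onI, rule ccontr)
      fix i j assume ij: "i \<in> I" "j \<in> I" "W i = W j" "i \<noteq> j"
      define h where "h k = (if k = i then 1 else if k = j then -1 else (0::real))" for k
      have "h k *\<^sub>R W k = (if k = i then W k else 0) - (if k = j then W k else 0)" for k
        using ij by (auto simp: h_def)
      then have "(\<Sum>k\<in>I. h k *\<^sub>R W k) = 0"
        using ij fin by (simp add: sum_subtractf)
      then show False using H ij by (force simp: h_def)
    qed
    show "independent (W ` I)"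
    proof
      assume "dependent (W ` I)"
      then obtain u v where uv: "v \<in> W ` I" "u v \<noteq> 0" "(\<Sum>v\<in>W ` I. u v *\<^sub>R v) = 0"
        using dependent_finite[of "W ` I"] fin by auto
      have "(\<Sum>k\<in>I. u (W k) *\<^sub>R W k) = 0"
        using uv(3) sum.reindex[OF inj, of "\<lambda>v. u v *\<^sub>R v"] by simp
      then show False using H uv by auto
    qed
  qed
qed

lemma sgn_opposite_iff_sgn_eq:
  fixes a b x y :: real
  assumes "a \<noteq> 0" "x \<noteq> 0" "y \<noteq> 0" "a * y + b * x = 0"
  shows "sgn x = - sgn y \<longleftrightarrow> sgn a = sgn b"
proof -
  have "sgn a * sgn y = - (sgn b * sgn x)"
    using arg_cong[OF assms(4)[unfolded add_eq_0_iff], of sgn] by (simp add: sgn_mult)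
  then show ?thesis using assms(1-3) by (auto simp: sgn_if split: if_splits)
qed

lemma dim_span_eq_iff_independent_tail:
  fixes V :: "nat \<Rightarrow> 'a::euclidean_space"
  assumes p: "1 \<le> p" and \<beta>: "\<beta> 1 \<noteq> 0" "(\<Sum>i=1..p. \<beta> i *\<^sub>R V i) = 0"
  shows "dim (span (V ` {1..p})) = p - 1 \<longleftrightarrow> inj_on V {2..p} \<and> independent (V ` {2..p})"
proof -
  let ?B = "V ` {2..p}"
  have split: "{1..p} = insert 1 {2..p}" using p by auto
  then have eq: "\<beta> 1 *\<^sub>R V 1 = - (\<Sum>i=2..p. \<beta> i *\<^sub>R V i)"
    using \<beta>(2) by (simp add: eq_neg_iff_add_eq_0)
  have "V 1 = - (1 / \<beta> 1) *\<^sub>R (\<Sum>i=2..p. \<beta> i *\<^sub>R V i)"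
    using arg_cong[OF eq, of "scaleR (1 / \<beta> 1)"] \<beta>(1) by simp
  also have "\<dots> \<in> span ?B" by (intro span_neg span_scale span_sum span_base) auto
  finally have "V 1 \<in> span ?B" .
  then have dim: "dim (span (V ` {1..p})) = dim ?B"
    unfolding split by (simp add: span_redundant)
  have "dim ?B \<le> card ?B" by (simp add: dim_le_card')
  moreover have "card ?B \<le> card {2..p}" by (rule card_image_le) simp
  moreover have "card {2..p} = p - 1" by simp
  ultimately show ?thesis
    unfolding dim
    using eq_card_imp_inj_on[of "{2..p}" V] card_eq_dim[OF order_refl, of ?B] span_superset[of ?B]
    by (auto simp: dim_eq_card_independent card_image)
qed

lemma basis_extension_from:
  fixes B Z :: "'a::euclidean_space set"
  assumes B: "independent B" and Z: "independent Z" "card Z = DIM('a)"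
  obtains E where "E \<subseteq> Z" "B \<inter> E = {}" "independent (B \<union> E)" "card E = DIM('a) - card B"
proof -
  obtain B' where B': "B \<subseteq> B'" "B' \<subseteq> B \<union> Z" "independent B'" "B \<union> Z \<subseteq> span B'"
    using maximal_independent_subset_extend[of B "B \<union> Z"] B by blast
  have "span Z = UNIV" using Z dim_eq_full[of Z] by (simp add: dim_eq_card_independent)
  moreover have "span Z \<subseteq> span B'" using B'(4) by (metis le_sup_iff span_mono span_span)
  ultimately have "span B' = UNIV" by auto
  then have "card B' = DIM('a)" using B'(3) by (metis dim_UNIV dim_span_eq_card_independent)
  moreover have "finite B" using B by (rule finiteI_independent)
  ultimately have "card (B' - B) = DIM('a) - card B" using B'(1) by (simp add: card_Diff_subset)
  moreover have "B \<union> (B' - B) = B'" using B'(1) by blast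
  ultimately show ?thesis using that[of "B' - B"] B' by auto
qed

lemma independent_family_extension_from:
  fixes V :: "nat \<Rightarrow> 'a::euclidean_space"
  assumes p: "p \<in> {1..DIM('a)+1}" and V: "inj_on V {2..p}" "independent (V ` {2..p})"
    and Z: "independent Z" "card Z = DIM('a)"
  obtains V' where "\<forall>i\<in>{1..p}. V' i = V i" "\<forall>i\<in>{p+1..DIM('a)+1}. V' i \<in> Z"
    "inj_on V' {2..DIM('a)+1}" "independent (V' ` {2..DIM('a)+1})"
proof -
  obtain E where E: "E \<subseteq> Z" "V ` {2..p} \<inter> E = {}" "independent (V ` {2..p} \<union> E)"
    "card E = DIM('a) - card (V ` {2..p})"
    using basis_extension_from[OF V(2) Z] by blast
  have "card {p+1..DIM('a)+1} = card E" using E(4) V(1) p by (simp add: card_image)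
  moreover have "finite E" using E(3) finiteI_independent by blast
  ultimately obtain e where e: "bij_betw e {p+1..DIM('a)+1} E"
    by (metis finite_same_card_bij finite_atLeastAtMost)
  define V' where "V' i = (if i \<le> p then V i else e i)" for i
  have split: "{2..DIM('a)+1} = {2..p} \<union> {p+1..DIM('a)+1}" using p by auto
  have image: "V' ` ({2..p} \<union> {p+1..DIM('a)+1}) = V ` {2..p} \<union> E"
    using e unfolding image_Un V'_def bij_betw_def by (auto cong: image_cong)
  have inj: "inj_on V' ({2..p} \<union> {p+1..DIM('a)+1})"
    unfolding inj_on_Un
  proof (intro conjI)
    show "inj_on V' {2..p}" using V(1) by (simp add: V'_def inj_on_def)
    show "inj_on V' {p+1..DIM('a)+1}" using e by (auto simp: V'_def bij_betw_def inj_on_def)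
    show "V' ` ({2..p} - {p+1..DIM('a)+1}) \<inter> V' ` ({p+1..DIM('a)+1} - {2..p}) = {}"
      using e E(2) by (auto simp: V'_def bij_betw_def)
  qed
  show ?thesis
  proof (rule that)
    show "\<forall>i\<in>{1..p}. V' i = V i" by (simp add: V'_def)
    show "\<forall>i\<in>{p+1..DIM('a)+1}. V' i \<in> Z" using e E(1) by (auto simp: V'_def bij_betw_def)
    show "inj_on V' {2..DIM('a)+1}" unfolding split by (rule inj)
    show "independent (V' ` {2..DIM('a)+1})" unfolding split image by (rule E(3))
  qed
qed

lemma bij_betw_pos_of: "bij_betw (pos_of :: 'n::finite \<Rightarrow> nat) UNIV {1..CARD('n)}"
proof -
  have "\<exists>g. bij_betw g (UNIV :: 'n set) {1..CARD('n)}"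
    by (rule finite_same_card_bij) auto
  then show ?thesis unfolding pos_of_def by (rule someI_ex)
qed

lemma bij_betw_col_index:
  assumes "s \<in> {1..D+1}"
  shows "bij_betw (col_index s) {1..D} ({1..D+1} - {s})"
proof (rule bij_betw_imageI)
  show "inj_on (col_index s) {1..D}"
    by (auto simp: inj_on_def col_index_def split: if_splits)
  show "col_index s ` {1..D} = {1..D+1} - {s}"
  proof
    show "col_index s ` {1..D} \<subseteq> {1..D+1} - {s}" using assms by (auto simp: col_index_def)
    show "{1..D+1} - {s} \<subseteq> col_index s ` {1..D}"
    proof
      fix m assume m: "m \<in> {1..D+1} - {s}"
      show "m \<in> col_index s ` {1..D}"
      proof (cases "m < s")
        case True
        then show ?thesis using m assms by (intro image_eqI[of _ _ m]) (auto simp: col_index_def)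
      next
        case False
        then show ?thesis using m assms by (intro image_eqI[of _ _ "m - 1"]) (auto simp: col_index_def)
      qed
    qed
  qed
qed

lemma bij_betw_col_index_pos_of:
  assumes "s \<in> {1..CARD('n)+1}"
  shows "bij_betw (\<lambda>j::'n::finite. col_index s (pos_of j)) UNIV ({1..CARD('n)+1} - {s})"
  using bij_betw_trans[OF bij_betw_pos_of bij_betw_col_index[OF assms]] by (simp add: comp_def)

lemma Delta_eq_det_rows: "Delta V s = det (\<chi> j. V (col_index s (pos_of j)))"
proof -
  have rows: "(\<chi> i j. V (col_index s (pos_of j)) $ i) = transpose (\<chi> j. V (col_index s (pos_of j)))"
    by (simp add: transpose_def vec_eq_iff)
  show ?thesis unfolding Delta_def rows by (rule det_transpose)
qed

lemma det_rows_eq_0_iff: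
  fixes r :: "'n::finite \<Rightarrow> real^'n"
  shows "det (\<chi> j. r j) = 0 \<longleftrightarrow> (\<exists>x. x \<noteq> 0 \<and> (\<Sum>j\<in>UNIV. x $ j *\<^sub>R r j) = 0)"
proof -
  let ?M = "transpose (\<chi> j. r j)"
  have lin: "linear ((*v) ?M)" by (rule matrix_vector_mul_linear)
  have "det (\<chi> j. r j) \<noteq> 0 \<longleftrightarrow> inj ((*v) ?M)"
    using det_nz_iff_inj[OF lin] by (simp add: matrix_of_matrix_vector_mul)
  also have "\<dots> \<longleftrightarrow> (\<forall>x. ?M *v x = 0 \<longrightarrow> x = 0)"
    using linear_injective_0[OF lin] by simp
  also have "\<dots> \<longleftrightarrow> (\<forall>x. (\<Sum>j\<in>UNIV. x $ j *\<^sub>R r j) = 0 \<longrightarrow> x = 0)"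
    by (simp add: matrix_mult_sum row_def scalar_mult_eq_scaleR vec_lambda_eta)
  finally show ?thesis by blast
qed

lemma det_row_linear_combination:
  fixes v :: "'k \<Rightarrow> 'a::comm_ring_1^'n::finite"
  assumes "finite T"
  shows "det (\<chi> j. if j = j0 then \<Sum>k\<in>T. c k *s v k else r j) =
    (\<Sum>k\<in>T. c k * det (\<chi> j. if j = j0 then v k else r j))"
proof -
  have "det (\<chi> j. if j = j0 then \<Sum>k\<in>T. c k *s v k else r j) =
      (\<Sum>k\<in>T. det (\<chi> j. if j = j0 then c k *s v k else r j))"
    by (rule det_linear_row_sum[OF assms])
  also have "\<dots> = (\<Sum>k\<in>T. c k * det (\<chi> j. if j = j0 then v k else r j))"
    using det_row_mul[of j0 _ "\<lambda>_. v _" r] by simp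
  finally show ?thesis .
qed

definition linear_relation :: "(nat \<Rightarrow> real^'n::finite) \<Rightarrow> (nat \<Rightarrow> real) \<Rightarrow> bool" where
  "linear_relation V g \<longleftrightarrow> (\<Sum>k\<in>{1..CARD('n)+1}. g k *\<^sub>R V k) = 0"

lemma linear_relation_diff:
  assumes "linear_relation V g" "linear_relation V h"
  shows "linear_relation V (\<lambda>k. g k - c * h k)"
proof -
  let ?I = "{1..CARD('a)+1}"
  have "(\<Sum>k\<in>?I. (g k - c * h k) *\<^sub>R V k) = (\<Sum>k\<in>?I. g k *\<^sub>R V k - c *\<^sub>R (h k *\<^sub>R V k))"
    by (simp add: scaleR_diff_left)
  also have "\<dots> = (\<Sum>k\<in>?I. g k *\<^sub>R V k) - c *\<^sub>R (\<Sum>k\<in>?I. h k *\<^sub>R V k)"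
    by (simp only: sum_subtractf scaleR_sum_right)
  finally show ?thesis using assms unfolding linear_relation_def by simp
qed

lemma linear_relation_scale:
  assumes "linear_relation V g"
  shows "linear_relation V (\<lambda>k. c * g k)"
proof -
  have "(\<Sum>k\<in>{1..CARD('a)+1}. (c * g k) *\<^sub>R V k) = c *\<^sub>R (\<Sum>k\<in>{1..CARD('a)+1}. g k *\<^sub>R V k)"
    by (simp only: scaleR_sum_right scaleR_scaleR)
  then show ?thesis using assms by (simp add: linear_relation_def)
qed

lemma sum_col_index_pos_of:
  fixes V :: "nat \<Rightarrow> real^'n::finite"
  assumes s: "s \<in> {1..CARD('n)+1}" and "g s = 0"
  shows "(\<Sum>k\<in>{1..CARD('n)+1}. g k *\<^sub>R V k) =
    (\<Sum>j::'n\<in>UNIV. g (col_index s (pos_of j)) *\<^sub>R V (col_index s (pos_of j)))"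
proof -
  have "(\<Sum>k\<in>{1..CARD('n)+1}. g k *\<^sub>R V k) = (\<Sum>k\<in>{1..CARD('n)+1} - {s}. g k *\<^sub>R V k)"
    using assms by (intro sum.mono_neutral_right) auto
  also have "\<dots> = (\<Sum>j::'n\<in>UNIV. g (col_index s (pos_of j)) *\<^sub>R V (col_index s (pos_of j)))"
    using sum.reindex_bij_betw[OF bij_betw_col_index_pos_of[OF s], of "\<lambda>k. g k *\<^sub>R V k"] by simp
  finally show ?thesis .
qed

lemma Delta_eq_0_iff:
  fixes V :: "nat \<Rightarrow> real^'n::finite"
  assumes s: "s \<in> {1..CARD('n)+1}"
  shows "Delta V s = 0 \<longleftrightarrow>
    (\<exists>g. linear_relation V g \<and> g s = 0 \<and> (\<exists>k\<in>{1..CARD('n)+1}. g k \<noteq> 0))"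
proof -
  let ?I = "{1..CARD('n)+1}"
  let ?c = "\<lambda>j::'n. col_index s (pos_of j)"
  have c: "bij_betw ?c UNIV (?I - {s})" by (rule bij_betw_col_index_pos_of[OF s])
  note sum_eq = sum_col_index_pos_of[OF s]
  have "Delta V s = 0 \<longleftrightarrow> (\<exists>x. x \<noteq> 0 \<and> (\<Sum>j\<in>UNIV. x $ j *\<^sub>R V (?c j)) = 0)"
    unfolding Delta_eq_det_rows by (rule det_rows_eq_0_iff)
  also have "\<dots> \<longleftrightarrow> (\<exists>g. linear_relation V g \<and> g s = 0 \<and> (\<exists>k\<in>?I. g k \<noteq> 0))"
  proof
    assume "\<exists>x. x \<noteq> 0 \<and> (\<Sum>j\<in>UNIV. x $ j *\<^sub>R V (?c j)) = 0"
    then obtain x where x: "x \<noteq> 0" "(\<Sum>j\<in>UNIV. x $ j *\<^sub>R V (?c j)) = 0" by blast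
    define g where "g k = (if k \<in> ?I - {s} then x $ inv_into UNIV ?c k else 0)" for k
    have inj_c: "inj ?c" using c by (simp add: bij_betw_def)
    have gc: "g (?c j) = x $ j" for j
      using bij_betw_apply[OF c UNIV_I, of j] by (simp add: g_def inv_into_f_f[OF inj_c])
    have "g s = 0" by (simp add: g_def)
    moreover have "linear_relation V g"
      unfolding linear_relation_def sum_eq[where g = g and V = V, OF \<open>g s = 0\<close>] gc using x(2) .
    moreover obtain j where "x $ j \<noteq> 0" using x(1) by (auto simp: vec_eq_iff)
    then have "g (?c j) \<noteq> 0" "?c j \<in> ?I" using gc bij_betw_apply[OF c] by auto
    ultimately show "\<exists>g. linear_relation V g \<and> g s = 0 \<and> (\<exists>k\<in>?I. g k \<noteq> 0)" by blast
  next
    assume "\<exists>g. linear_relation V g \<and> g s = 0 \<and> (\<exists>k\<in>?I. g k \<noteq> 0)"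
    then obtain g k where g: "linear_relation V g" "g s = 0" "k \<in> ?I" "g k \<noteq> 0" by blast
    have "k \<in> range ?c" using c g(2-4) unfolding bij_betw_def by auto
    then have "(\<chi> j. g (?c j)) \<noteq> 0" using g(4) by (auto simp: vec_eq_iff)
    moreover have "(\<Sum>j\<in>UNIV. (\<chi> j. g (?c j)) $ j *\<^sub>R V (?c j)) = 0"
      using g(1) unfolding linear_relation_def sum_eq[where g = g and V = V, OF g(2)] by simp
    ultimately show "\<exists>x. x \<noteq> 0 \<and> (\<Sum>j\<in>UNIV. x $ j *\<^sub>R V (?c j)) = 0" by blast
  qed
  finally show ?thesis .
qed

text \<open>Replace the row \<open>V\<^sub>s\<^sub>+\<^sub>1\<close> of \<open>\<Delta>\<^sub>s\<close> by the vector \<open>\<Sum> g\<^sub>k V\<^sub>k = 0\<close> and expand by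
  multilinearity: the row \<open>V\<^sub>s\<close> yields \<open>\<Delta>\<^sub>s\<^sub>+\<^sub>1\<close>, the row \<open>V\<^sub>s\<^sub>+\<^sub>1\<close> yields \<open>\<Delta>\<^sub>s\<close>, and all other
  rows repeat a row of the matrix.\<close>

lemma linear_relation_Delta_adjacent:
  fixes V :: "nat \<Rightarrow> real^'n::finite"
  assumes s: "s \<in> {1..CARD('n)}" and g: "linear_relation V g"
  shows "g s * Delta V (s+1) + g (s+1) * Delta V s = 0"
proof -
  let ?I = "{1..CARD('n)+1}"
  let ?c = "\<lambda>j::'n. col_index s (pos_of j)"
  have c: "bij_betw ?c UNIV (?I - {s})" using s by (intro bij_betw_col_index_pos_of) auto
  have "s \<in> range (pos_of :: 'n \<Rightarrow> nat)"
    using s bij_betw_pos_of[where 'n='n] by (simp add: bij_betw_def)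
  then obtain j0 :: 'n where j0: "pos_of j0 = s" by blast
  have pos_of_neq: "pos_of j \<noteq> s" if "j \<noteq> j0" for j
    using bij_betw_pos_of[where 'n='n] that j0 by (auto simp: bij_betw_def inj_on_def)
  define \<phi> where "\<phi> v = det (\<chi> j. if j = j0 then v else V (?c j))" for v
  have c_j0: "?c j0 = s+1" using j0 by (simp add: col_index_def)
  have \<phi>_Suc: "\<phi> (V (s+1)) = Delta V s"
    unfolding \<phi>_def Delta_eq_det_rows by (rule arg_cong[where f=det]) (auto simp: c_j0 vec_eq_iff)
  have "(if j = j0 then V s else V (?c j)) = V (col_index (s+1) (pos_of j))" for j
    using pos_of_neq[of j] by (cases "j = j0") (simp_all add: j0 col_index_def)
  then have \<phi>_s: "\<phi> (V s) = Delta V (s+1)"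
    unfolding \<phi>_def Delta_eq_det_rows by simp
  have \<phi>_other: "\<phi> (V k) = 0" if k: "k \<in> ?I" "k \<noteq> s" "k \<noteq> s+1" for k
  proof -
    obtain j1 where j1: "?c j1 = k" using c k unfolding bij_betw_def by (metis DiffI imageE singletonD)
    then have "j1 \<noteq> j0" using c_j0 k by auto
    then show ?thesis unfolding \<phi>_def
      by (intro det_identical_rows[of j0 j1]) (simp_all add: row_def j1)
  qed
  have \<phi>_linear: "\<phi> (\<Sum>k\<in>?I. g k *\<^sub>R V k) = (\<Sum>k\<in>?I. g k * \<phi> (V k))"
    unfolding \<phi>_def
    by (rule det_row_linear_combination[where 'a = real, OF finite_atLeastAtMost,
          unfolded scalar_mult_eq_scaleR])
  have "0 = \<phi> 0" unfolding \<phi>_def using det_row_0[of j0 "\<lambda>j. V (?c j)"] by (rule sym)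
  also have "\<phi> 0 = \<phi> (\<Sum>k\<in>?I. g k *\<^sub>R V k)" using g by (simp add: linear_relation_def)
  also have "\<dots> = (\<Sum>k\<in>?I. g k * \<phi> (V k))" by (rule \<phi>_linear)
  also have "\<dots> = (\<Sum>k\<in>{s, s+1}. g k * \<phi> (V k))"
    using s \<phi>_other by (intro sum.mono_neutral_right) auto
  also have "\<dots> = g s * Delta V (s+1) + g (s+1) * Delta V s" using \<phi>_s \<phi>_Suc by simp
  finally show ?thesis by simp
qed

lemma linear_relation_eq_0_if_Delta_1:
  fixes V :: "nat \<Rightarrow> real^'n::finite"
  assumes "Delta V 1 \<noteq> 0" "linear_relation V g" "g 1 = 0" "k \<in> {1..CARD('n)+1}"
  shows "g k = 0"
proof (rule ccontr)
  assume "g k \<noteq> 0"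
  then have "\<exists>g. linear_relation V g \<and> g 1 = 0 \<and> (\<exists>k\<in>{1..CARD('n)+1}. g k \<noteq> 0)"
    using assms(2-4) by blast
  then show False using assms(1) Delta_eq_0_iff[of 1 V] by simp
qed

lemma Delta_1_neq_0_iff:
  fixes V :: "nat \<Rightarrow> real^'n::finite"
  shows "Delta V 1 \<noteq> 0 \<longleftrightarrow> inj_on V {2..CARD('n)+1} \<and> independent (V ` {2..CARD('n)+1})"
proof -
  let ?J = "{2..CARD('n)+1}"
  have split: "{1..CARD('n)+1} = insert 1 ?J" by auto
  have relation_iff: "linear_relation V g \<longleftrightarrow> (\<Sum>k\<in>?J. g k *\<^sub>R V k) = 0" if "g 1 = 0" for g
  proof -
    have "(\<Sum>k\<in>{1..CARD('n)+1}. g k *\<^sub>R V k) = g 1 *\<^sub>R V 1 + (\<Sum>k\<in>?J. g k *\<^sub>R V k)"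
      unfolding split by (rule sum.insert) auto
    then show ?thesis using that by (simp add: linear_relation_def)
  qed
  have "Delta V 1 \<noteq> 0 \<longleftrightarrow> (\<forall>h. (\<Sum>k\<in>?J. h k *\<^sub>R V k) = 0 \<longrightarrow> (\<forall>k\<in>?J. h k = 0))"
  proof (intro iffI allI impI ballI)
    fix h k assume D1: "Delta V 1 \<noteq> 0" and h: "(\<Sum>k\<in>?J. h k *\<^sub>R V k) = 0" and k: "k \<in> ?J"
    have "(\<Sum>k\<in>?J. (h(1 := 0)) k *\<^sub>R V k) = (\<Sum>k\<in>?J. h k *\<^sub>R V k)"
      by (rule sum.cong) auto
    then have "linear_relation V (h(1 := 0))" using h by (simp add: relation_iff)
    then have "(h(1 := 0)) k = 0" by (rule linear_relation_eq_0_if_Delta_1[OF D1]) (use k in auto)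
    then show "h k = 0" using k by simp
  next
    assume H: "\<forall>h. (\<Sum>k\<in>?J. h k *\<^sub>R V k) = 0 \<longrightarrow> (\<forall>k\<in>?J. h k = 0)"
    show "Delta V 1 \<noteq> 0"
    proof
      assume "Delta V 1 = 0"
      then obtain g k where g: "linear_relation V g" "g 1 = 0" "k \<in> insert 1 ?J" "g k \<noteq> 0"
        using Delta_eq_0_iff[of 1 V] unfolding split by blast
      then show False using H relation_iff[of g] by auto
    qed
  qed
  also have "\<dots> \<longleftrightarrow> inj_on V ?J \<and> independent (V ` ?J)"
    by (simp add: inj_on_independent_image_iff)
  finally show ?thesis .
qed

lemma linear_relation_proportional:
  fixes V :: "nat \<Rightarrow> real^'n::finite"
  assumes D1: "Delta V 1 \<noteq> 0" and g: "linear_relation V g" "g 1 \<noteq> 0" and h: "linear_relation V h"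
    and k: "k \<in> {1..CARD('n)+1}"
  shows "h k = (h 1 / g 1) * g k"
proof -
  have "linear_relation V (\<lambda>k. h k - (h 1 / g 1) * g k)" by (rule linear_relation_diff[OF h g(1)])
  moreover have "(\<lambda>k. h k - (h 1 / g 1) * g k) 1 = 0" using g(2) by simp
  ultimately have "h k - (h 1 / g 1) * g k = 0" by (rule linear_relation_eq_0_if_Delta_1[OF D1 _ _ k])
  then show ?thesis by simp
qed

lemma Delta_eq_0_iff_coeff_eq_0:
  fixes V :: "nat \<Rightarrow> real^'n::finite"
  assumes D1: "Delta V 1 \<noteq> 0" and g: "linear_relation V g" "g 1 \<noteq> 0" and s: "s \<in> {1..CARD('n)+1}"
  shows "Delta V s = 0 \<longleftrightarrow> g s = 0"
proof
  assume "Delta V s = 0"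
  then obtain h k where h: "linear_relation V h" "h s = 0" "k \<in> {1..CARD('n)+1}" "h k \<noteq> 0"
    using Delta_eq_0_iff[OF s] by blast
  have "h 1 \<noteq> 0"
    using linear_relation_proportional[OF D1 g h(1) h(3)] h(4) by auto
  then show "g s = 0"
    using linear_relation_proportional[OF D1 g h(1) s] h(2) g(2) by simp
next
  assume "g s = 0"
  moreover have "1 \<in> {1..CARD('n)+1}" by simp
  ultimately show "Delta V s = 0" using Delta_eq_0_iff[OF s] g by blast
qed

lemma exists_linear_relation_coeff_1:
  fixes V :: "nat \<Rightarrow> real^'n::finite"
  assumes D1: "Delta V 1 \<noteq> 0"
  obtains g where "linear_relation V g" "g 1 = 1"
proof -
  let ?I = "{1..CARD('n)+1}"
  have "\<not> (inj_on V ?I \<and> independent (V ` ?I))"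
  proof
    assume V: "inj_on V ?I \<and> independent (V ` ?I)"
    then have "card (V ` ?I) = CARD('n) + 1" by (simp add: card_image)
    moreover have "card (V ` ?I) \<le> CARD('n)" using independent_bound[of "V ` ?I"] V by simp
    ultimately show False by simp
  qed
  then obtain g0 k where g0: "linear_relation V g0" "k \<in> ?I" "g0 k \<noteq> 0"
    unfolding inj_on_independent_image_iff[OF finite_atLeastAtMost] linear_relation_def by blast
  have "g0 1 \<noteq> 0" using linear_relation_eq_0_if_Delta_1[OF D1 g0(1) _ g0(2)] g0(3) by blast
  then show ?thesis
    using that linear_relation_scale[OF g0(1), of "1 / g0 1"] by simp
qed

lemma sgn_Delta_opposite_iff:
  fixes V :: "nat \<Rightarrow> real^'n::finite"
  assumes g: "linear_relation V g" and s: "s \<in> {1..CARD('n)}" and "g s \<noteq> 0"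
    and "Delta V s \<noteq> 0" "Delta V (s+1) \<noteq> 0"
  shows "sgn (Delta V s) = - sgn (Delta V (s+1)) \<longleftrightarrow> sgn (g s) = sgn (g (s+1))"
  using sgn_opposite_iff_sgn_eq[OF assms(3-5) linear_relation_Delta_adjacent[OF s g]] .

text \<open>Rank \<open>p - 1\<close> plus a relation with all coefficients nonzero makes \<open>V\<^sub>1, \<dots>, V\<^sub>p\<close> a
  circuit (a minimal dependent family); here that relation is moreover positive.\<close>

definition positive_circuit :: "nat \<Rightarrow> (nat \<Rightarrow> 'a::euclidean_space) \<Rightarrow> bool" where
  "positive_circuit p V \<longleftrightarrow> dim (span (V ` {1..p})) = p - 1 \<and>
     (\<exists>\<beta>. (\<forall>i\<in>{1..p}. \<beta> i > 0) \<and> (\<Sum>i=1..p. \<beta> i *\<^sub>R V i) = 0)"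

definition alternance_completion :: "(real^'n::finite) set \<Rightarrow> nat \<Rightarrow> (nat \<Rightarrow> real^'n) \<Rightarrow> bool" where
  "alternance_completion Z p V \<longleftrightarrow>
     (\<forall>i\<in>{p+1..CARD('n)+1}. V i \<in> Z) \<and>
     (\<forall>s\<in>{1..p}. Delta V s \<noteq> 0) \<and>
     (\<forall>s\<in>{1..p-1}. sgn (Delta V s) = - sgn (Delta V (s+1))) \<and>
     (\<forall>s\<in>{p+1..CARD('n)+1}. Delta V s = 0)"

lemma positive_circuit_cong:
  assumes "\<forall>i\<in>{1..p}. V' i = V i"
  shows "positive_circuit p V' \<longleftrightarrow> positive_circuit p V"
proof -
  have "V' ` {1..p} = V ` {1..p}" using assms by (intro image_cong) auto
  moreover have "(\<Sum>i=1..p. \<beta> i *\<^sub>R V' i) = (\<Sum>i=1..p. \<beta> i *\<^sub>R V i)" for \<beta>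
    using assms by (intro sum.cong) auto
  ultimately show ?thesis unfolding positive_circuit_def by simp
qed

lemma linear_relation_iff_initial_sum:
  fixes V :: "nat \<Rightarrow> real^'n::finite"
  assumes "p \<le> CARD('n)+1" and "\<forall>k\<in>{p+1..CARD('n)+1}. g k = 0"
  shows "linear_relation V g \<longleftrightarrow> (\<Sum>i=1..p. g i *\<^sub>R V i) = 0"
proof -
  have "(\<Sum>i=1..p. g i *\<^sub>R V i) = (\<Sum>i\<in>{1..CARD('n)+1}. g i *\<^sub>R V i)"
    using assms by (intro sum.mono_neutral_left) auto
  then show ?thesis by (simp add: linear_relation_def)
qed

lemma Delta_alternates_iff_linear_relation_pos:
  fixes V :: "nat \<Rightarrow> real^'n::finite"
  assumes g: "linear_relation V g" "g 1 > 0" and p: "p \<le> CARD('n)+1"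
    and nz: "\<forall>s\<in>{1..p}. Delta V s \<noteq> 0"
  shows "(\<forall>s\<in>{1..p-1}. sgn (Delta V s) = - sgn (Delta V (s+1))) \<longleftrightarrow> (\<forall>s\<in>{1..p}. g s > 0)"
proof
  assume alt: "\<forall>s\<in>{1..p-1}. sgn (Delta V s) = - sgn (Delta V (s+1))"
  have "g s > 0" if "1 \<le> s" "s \<le> p" for s
    using that
  proof (induction s rule: nat_induct_at_least)
    case base
    then show ?case using g(2) by simp
  next
    case (Suc s)
    have s: "s \<in> {1..CARD('n)}" "s \<in> {1..p-1}" using Suc.hyps Suc.prems p by auto
    have "g s > 0" using Suc by simp
    moreover have "Delta V s \<noteq> 0" "Delta V (s+1) \<noteq> 0" using nz s(2) by auto
    ultimately have "sgn (g (s+1)) = 1"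
      using sgn_Delta_opposite_iff[OF g(1) s(1)] alt s(2) by simp
    then show ?case by (simp add: sgn_1_pos)
  qed
  then show "\<forall>s\<in>{1..p}. g s > 0" by auto
next
  assume pos: "\<forall>s\<in>{1..p}. g s > 0"
  show "\<forall>s\<in>{1..p-1}. sgn (Delta V s) = - sgn (Delta V (s+1))"
  proof
    fix s assume "s \<in> {1..p-1}"
    then have s: "s \<in> {1..CARD('n)}" "s \<in> {1..p}" "s + 1 \<in> {1..p}" using p by auto
    then have "g s > 0" "g (s+1) > 0" "Delta V s \<noteq> 0" "Delta V (s+1) \<noteq> 0"
      using pos nz by simp_all
    then show "sgn (Delta V s) = - sgn (Delta V (s+1))"
      using sgn_Delta_opposite_iff[OF g(1) s(1)] by simp
  qed
qed

lemma positive_circuit_if_alternance_completion: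
  fixes V :: "nat \<Rightarrow> real^'n::finite"
  assumes p: "p \<in> {1..CARD('n)+1}" and V: "alternance_completion Z p V"
  shows "positive_circuit p V"
proof -
  have nz: "\<forall>s\<in>{1..p}. Delta V s \<noteq> 0"
    and alt: "\<forall>s\<in>{1..p-1}. sgn (Delta V s) = - sgn (Delta V (s+1))"
    and z: "\<forall>s\<in>{p+1..CARD('n)+1}. Delta V s = 0"
    using V by (simp_all add: alternance_completion_def)
  have D1: "Delta V 1 \<noteq> 0" using nz p by auto
  obtain g where g: "linear_relation V g" "g 1 = 1" using exists_linear_relation_coeff_1[OF D1] .
  have pos: "\<forall>s\<in>{1..p}. g s > 0"
    using Delta_alternates_iff_linear_relation_pos[OF g(1) _ _ nz] g(2) p alt by simp
  have "g k = 0" if k: "k \<in> {p+1..CARD('n)+1}" for k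
  proof -
    have "k \<in> {1..CARD('n)+1}" using k p by auto
    then show ?thesis using Delta_eq_0_iff_coeff_eq_0[OF D1 g(1)] g(2) z k by simp
  qed
  then have sum: "(\<Sum>i=1..p. g i *\<^sub>R V i) = 0"
    using linear_relation_iff_initial_sum[of p g V] p g(1) by simp
  have "{2..p} \<subseteq> {2..CARD('n)+1}" using p by auto
  then have "inj_on V {2..p} \<and> independent (V ` {2..p})"
    using D1 unfolding Delta_1_neq_0_iff by (metis image_mono independent_mono inj_on_subset)
  moreover have "1 \<le> p" "g 1 \<noteq> 0" using p g(2) by auto
  ultimately have "dim (span (V ` {1..p})) = p - 1"
    using dim_span_eq_iff_independent_tail sum by blast
  then show ?thesis using pos sum unfolding positive_circuit_def by blast
qed

lemma alternance_completion_if_positive_circuit: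
  fixes V :: "nat \<Rightarrow> real^'n::finite"
  assumes p: "p \<in> {1..CARD('n)+1}" and Z: "independent Z" "card Z = CARD('n)"
    and V: "positive_circuit p V"
  obtains V' where "\<forall>i\<in>{1..p}. V' i = V i" "alternance_completion Z p V'"
proof -
  obtain \<beta> where \<beta>: "\<forall>i\<in>{1..p}. \<beta> i > 0" "(\<Sum>i=1..p. \<beta> i *\<^sub>R V i) = 0"
    and dim: "dim (span (V ` {1..p})) = p - 1"
    using V unfolding positive_circuit_def by blast
  have "1 \<le> p" "\<beta> 1 > 0" using p \<beta>(1)[rule_format, of 1] by auto
  then have "inj_on V {2..p} \<and> independent (V ` {2..p})"
    using dim_span_eq_iff_independent_tail \<beta>(2) dim by (metis less_irrefl)
  then obtain V' where V': "\<forall>i\<in>{1..p}. V' i = V i" "\<forall>i\<in>{p+1..CARD('n)+1}. V' i \<in> Z"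
    "inj_on V' {2..CARD('n)+1}" "independent (V' ` {2..CARD('n)+1})"
    using independent_family_extension_from[of p V Z] p Z by auto
  have D1: "Delta V' 1 \<noteq> 0" using V'(3,4) Delta_1_neq_0_iff by blast
  define g where "g k = (if k \<in> {1..p} then \<beta> k else 0)" for k
  have pos: "\<forall>s\<in>{1..p}. g s > 0" using \<beta>(1) by (simp add: g_def)
  have "(\<Sum>i=1..p. g i *\<^sub>R V' i) = (\<Sum>i=1..p. \<beta> i *\<^sub>R V i)" using V'(1) by (simp add: g_def)
  then have g: "linear_relation V' g"
    using linear_relation_iff_initial_sum[of p g V'] p \<beta>(2) by (simp add: g_def)
  have g_eq_0: "g s = 0 \<longleftrightarrow> s \<notin> {1..p}" for s
  proof (cases "s \<in> {1..p}")
    case True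
    then show ?thesis using pos by force
  next
    case False
    then show ?thesis by (auto simp: g_def)
  qed
  have Delta_eq_0: "Delta V' s = 0 \<longleftrightarrow> s \<notin> {1..p}" if "s \<in> {1..CARD('n)+1}" for s
    using Delta_eq_0_iff_coeff_eq_0[OF D1 g _ that] g_eq_0 \<open>1 \<le> p\<close> by simp
  then have "\<forall>s\<in>{1..p}. Delta V' s \<noteq> 0" using p by auto
  then have "\<forall>s\<in>{1..p-1}. sgn (Delta V' s) = - sgn (Delta V' (s+1))"
    using Delta_alternates_iff_linear_relation_pos[OF g] pos \<open>\<beta> 1 > 0\<close> p by (simp add: g_def)
  then show ?thesis
    using that[OF V'(1)] V'(2) Delta_eq_0 p unfolding alternance_completion_def by auto
qed

lemma alternance_data_iff:
  "alternance_data Grad eta nA Z p k0 i0 V \<longleftrightarrow>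
     k0 \<in> {1..p} \<and> i0 \<in> {k0..p} \<and> (\<forall>i\<in>{1..k0}. V i \<in> Grad) \<and>
     (\<forall>i\<in>{k0+1..i0}. V i \<in> eta) \<and> (\<forall>i\<in>{i0+1..p}. V i \<in> nA) \<and>
     alternance_completion Z p V"
  unfolding alternance_data_def alternance_completion_def by blast

lemma is_alternance_iff_positive_circuit:
  fixes V :: "nat \<Rightarrow> real^'n::finite"
  assumes p: "p \<in> {1..CARD('n)+1}" and Z: "independent Z" "card Z = CARD('n)"
    and k0: "k0 \<in> {1..p}" and i0: "i0 \<in> {k0..p}" and V: "\<forall>i\<in>{1..k0}. V i \<in> Grad"
    "\<forall>i\<in>{k0+1..i0}. V i \<in> eta" "\<forall>i\<in>{i0+1..p}. V i \<in> nA"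
  shows "is_alternance Grad eta nA Z p V \<longleftrightarrow> positive_circuit p V"
proof
  assume "is_alternance Grad eta nA Z p V"
  then obtain k0' i0' V' where "\<forall>i\<in>{1..p}. V' i = V i" "alternance_data Grad eta nA Z p k0' i0' V'"
    unfolding is_alternance_def by blast
  then show "positive_circuit p V"
    using positive_circuit_if_alternance_completion[OF p] positive_circuit_cong
    unfolding alternance_data_iff by blast
next
  assume "positive_circuit p V"
  then obtain V' where V': "\<forall>i\<in>{1..p}. V' i = V i" "alternance_completion Z p V'"
    using alternance_completion_if_positive_circuit[OF p Z] by blast
  then have "alternance_data Grad eta nA Z p k0 i0 V'"
    using k0 i0 V unfolding alternance_data_iff by auto
  then show "is_alternance Grad eta nA Z p V" using V'(1) unfolding is_alternance_def by blast
qed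

lemma alternance_exists_iff_positive_circuit:
  fixes Z :: "(real^'n::finite) set"
  assumes p: "p \<in> {1..CARD('n)+1}" and Z: "independent Z" "card Z = CARD('n)"
  shows "alternance_exists Grad eta nA Z p \<longleftrightarrow>
    (\<exists>k0 i0 V. k0 \<in> {1..p} \<and> i0 \<in> {k0..p} \<and> (\<forall>i\<in>{1..k0}. V i \<in> Grad) \<and>
       (\<forall>i\<in>{k0+1..i0}. V i \<in> eta) \<and> (\<forall>i\<in>{i0+1..p}. V i \<in> nA) \<and> positive_circuit p V)"
    (is "_ \<longleftrightarrow> ?circuit")
proof
  assume "alternance_exists Grad eta nA Z p"
  then show ?circuit
    using positive_circuit_if_alternance_completion[OF p]
    unfolding alternance_exists_def alternance_data_iff by blast
next
  assume ?circuit
  then obtain V where "is_alternance Grad eta nA Z p V"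
    using is_alternance_iff_positive_circuit[OF p Z] by blast
  then show "alternance_exists Grad eta nA Z p"
    unfolding is_alternance_def alternance_exists_def by blast
qed

theorem proposition1:
  fixes A :: "(real^'n) set"
    and K :: "'y::banach set"
    and f :: "real^'n \<Rightarrow> 'w::t2_space \<Rightarrow> real"
    and gradf :: "real^'n \<Rightarrow> 'w \<Rightarrow> real^'n"
    and G :: "real^'n \<Rightarrow> 'y"
    and DG :: "real^'n \<Rightarrow> ((real^'n) \<Rightarrow>\<^sub>L 'y)"
    and Z eta nA :: "(real^'n) set"
    and xs :: "real^'n"
    and p :: nat
  assumes A_ne: "A \<noteq> {}" and A_closed: "closed A" and A_convex: "convex A"
    and K_ne: "K \<noteq> {}" and K_closed: "closed K" and K_convex: "convex K" and K_cone: "cone K"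
    and W_compact: "compact (UNIV :: 'w set)"
    and f_deriv: "\<And>x \<omega>. ((\<lambda>z. f z \<omega>) has_derivative (\<lambda>h. gradf x \<omega> \<bullet> h)) (at x)"
    and f_cont: "continuous_on UNIV (\<lambda>(x, \<omega>). f x \<omega>)"
    and gradf_cont: "continuous_on UNIV (\<lambda>(x, \<omega>). gradf x \<omega>)"
    and G_deriv: "\<And>x. (G has_derivative blinfun_apply (DG x)) (at x)"
    and DG_cont: "continuous_on UNIV DG"
    and Z_indep: "independent Z" and Z_card: "card Z = CARD('n)"
    and feasible: "G xs \<in> K" "xs \<in> A"
    and eta_sub: "eta \<subseteq> constraint_normals G DG K xs"
    and eta_hull: "convex_conic_hull eta = constraint_normals G DG K xs"
    and nA_sub: "nA \<subseteq> normal_cone_cvx A xs"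
    and nA_hull: "convex_conic_hull nA = normal_cone_cvx A xs"
    and p_range: "p \<in> {1..CARD('n) + 1}"
  shows
    "(alternance_exists ((\<lambda>\<omega>. gradf xs \<omega>) ` active_set f xs) eta nA Z p \<longleftrightarrow>
       (\<exists>k0 i0 V. k0 \<in> {1..p} \<and> i0 \<in> {k0..p} \<and>
          (\<forall>i\<in>{1..k0}. V i \<in> (\<lambda>\<omega>. gradf xs \<omega>) ` active_set f xs) \<and>
          (\<forall>i\<in>{k0+1..i0}. V i \<in> eta) \<and>
          (\<forall>i\<in>{i0+1..p}. V i \<in> nA) \<and>
          dim (span (V ` {1..p})) = p - 1 \<and>
          (\<exists>\<beta>. (\<forall>i\<in>{1..p}. \<beta> i > 0) \<and> (\<Sum>i=1..p. \<beta> i *\<^sub>R V i) = 0)))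
     \<and>
     (\<forall>k0 i0 V. k0 \<in> {1..p} \<and> i0 \<in> {k0..p} \<and>
          (\<forall>i\<in>{1..k0}. V i \<in> (\<lambda>\<omega>. gradf xs \<omega>) ` active_set f xs) \<and>
          (\<forall>i\<in>{k0+1..i0}. V i \<in> eta) \<and>
          (\<forall>i\<in>{i0+1..p}. V i \<in> nA) \<longrightarrow>
        (is_alternance ((\<lambda>\<omega>. gradf xs \<omega>) ` active_set f xs) eta nA Z p V \<longleftrightarrow>
          dim (span (V ` {1..p})) = p - 1 \<and>
          (\<exists>\<beta>. (\<forall>i\<in>{1..p}. \<beta> i > 0) \<and> (\<Sum>i=1..p. \<beta> i *\<^sub>R V i) = 0)))"
  unfolding positive_circuit_def[symmetric]
  by (intro conjI allI impI alternance_exists_iff_positive_circuit[OF p_range Z_indep Z_card])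
    (use is_alternance_iff_positive_circuit[OF p_range Z_indep Z_card] in blast)

end
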